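(* Let $p$ be an odd prime, $\chi$ a Dirichlet character with odd conductor $f$, and $n,c,k$ positive integers with $c\equiv0\pmod{p-1}$. Then $$\Delta_c^k\epsilon_{n,\chi}\equiv0\pmod{p^k\mathbb Z_p[\chi]},$$ where $\Delta_c^k a_n=\sum_{j=0}^k\binom kj(-1)^{k-j}a_{n+jc}$.
   Context: $\mathbb Z_p[\chi]$ is the ring generated over $\mathbb Z_p$ by the values of $\chi$. For a primitive Dirichlet character $\psi$ of odd conductor $f_\psi$, the generalized Euler numbers $E_{n,\psi}$ are defined by $2\sum_{a=1}^{f_\psi}\frac{(-1)^a\psi(a)e^{at}}{e^{f_\psi t}+1}=\sum_{n\ge0}E_{n,\psi}\frac{t^n}{n!}$ (with $\psi(a)=0$ if $\gcd(a,f_\psi)>1$). Let $\omega$ be the Teichmüller character mod $p$. For $n\ge0$, $\chi_n$ is the primitive Dirichlet character associated with $a\mapsto\chi(a)\omega^{-n}(a)$ on $(\mathbb Z/\mathrm{lcm}(f,p)\mathbb Z)^\times$, and $\epsilon_{n,\chi}=(1-\chi_n(p)p^n)E_{n,\chi_n}$. *)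

theory Defs
  imports "HOL-Computational_Algebra.Computational_Algebra" "HOL-Number_Theory.Number_Theory"
begin

definition dirichlet_char :: "nat \<Rightarrow> (nat \<Rightarrow> complex) \<Rightarrow> bool" where
  "dirichlet_char m \<chi> \<longleftrightarrow> m > 0 \<and> (\<forall>a b. \<chi> (a * b) = \<chi> a * \<chi> b) \<and>
     (\<forall>a. \<chi> (a + m) = \<chi> a) \<and> (\<forall>a. \<chi> a = 0 \<longleftrightarrow> \<not> coprime a m) \<and> \<chi> 1 = 1"

definition primitive_char :: "nat \<Rightarrow> (nat \<Rightarrow> complex) \<Rightarrow> bool" where
  "primitive_char m \<chi> \<longleftrightarrow> dirichlet_char m \<chi> \<and>
     \<not> (\<exists>d. d dvd m \<and> d < m \<and> (\<forall>a. coprime a m \<and> [a = 1] (mod d) \<longrightarrow> \<chi> a = 1))"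

definition assoc_prim :: "nat \<Rightarrow> (nat \<Rightarrow> complex) \<Rightarrow> nat \<times> (nat \<Rightarrow> complex)" where
  "assoc_prim M g = (THE (F, \<psi>). F dvd M \<and> primitive_char F \<psi> \<and>
                        (\<forall>a. coprime a M \<longrightarrow> \<psi> a = g a))"

text \<open>Extensions of the p-adic absolute value to the algebraic numbers in \<complex>
  (equivalently: a choice of embedding of the algebraic numbers into \<complex>_p).\<close>
definition padic_abs_ext :: "nat \<Rightarrow> (complex \<Rightarrow> real) \<Rightarrow> bool" where
  "padic_abs_ext p N \<longleftrightarrow>
     (\<forall>x. algebraic x \<longrightarrow> N x \<ge> 0 \<and> (N x = 0 \<longleftrightarrow> x = 0)) \<and>
     (\<forall>x y. algebraic x \<and> algebraic y \<longrightarrow>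
         N (x * y) = N x * N y \<and> N (x + y) \<le> max (N x) (N y)) \<and>
     (\<forall>m::int. m \<noteq> 0 \<longrightarrow> N (of_int m) = real p powr (- real (multiplicity (int p) m)))"

definition teich :: "nat \<Rightarrow> (complex \<Rightarrow> real) \<Rightarrow> nat \<Rightarrow> complex" where
  "teich p N a = (if p dvd a then 0 else
     (THE z. z ^ (p - 1) = 1 \<and> N (z - of_nat a) < 1))"

definition gen_euler :: "nat \<Rightarrow> (nat \<Rightarrow> complex) \<Rightarrow> nat \<Rightarrow> complex" where
  "gen_euler F \<psi> n = fact n * fps_nth
     ((\<Sum>a=1..F. fps_const (2 * (-1) ^ a * \<psi> a) * fps_exp (of_nat a))
        / (fps_exp (of_nat F) + 1)) n"

definition eps :: "nat \<Rightarrow> (complex \<Rightarrow> real) \<Rightarrow> nat \<Rightarrow> (nat \<Rightarrow> complex) \<Rightarrow> nat \<Rightarrow> complex" where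
  "eps p N f \<chi> n = (case assoc_prim (lcm f p) (\<lambda>a. \<chi> a * inverse (teich p N a) ^ n) of
      (F, \<psi>) \<Rightarrow> (1 - \<psi> p * of_nat p ^ n) * gen_euler F \<psi> n)"

definition delta_op :: "nat \<Rightarrow> nat \<Rightarrow> (nat \<Rightarrow> complex) \<Rightarrow> nat \<Rightarrow> complex" where
  "delta_op c k a n = (\<Sum>j\<le>k. of_nat (k choose j) * (-1) ^ (k - j) * a (n + j * c))"

inductive_set zring :: "complex set \<Rightarrow> complex set" for S where
  zr_int: "of_int m \<in> zring S"
| zr_gen: "x \<in> S \<Longrightarrow> x \<in> zring S"
| zr_add: "x \<in> zring S \<Longrightarrow> y \<in> zring S \<Longrightarrow> x + y \<in> zring S"
| zr_mult: "x \<in> zring S \<Longrightarrow> y \<in> zring S \<Longrightarrow> x * y \<in> zring S"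

text \<open>y lies in Z_p[chi] = closure of Z[chi] in the completion.\<close>
definition in_Zp_chi :: "(complex \<Rightarrow> real) \<Rightarrow> (nat \<Rightarrow> complex) \<Rightarrow> complex \<Rightarrow> bool" where
  "in_Zp_chi N \<chi> y \<longleftrightarrow> (\<forall>e>0. \<exists>z\<in>zring (range \<chi>). N (y - z) < e)"

end

(*
  For n > 0 and (p - 1) | c the twists chi * omega^-(n + j c) all agree, so Delta_c^k eps_{n,chi}
  is Delta_c^k applied to eps_m = (1 - psi(p) p^m) E_{m,psi} for one primitive character psi of
  odd conductor F.  The generating function shows E_{m,psi} = sum_{a <= F L} (-1)^a psi(a) a^m
  modulo F L for every odd L; comparing L = p^r with L = p^(r-1) gives
    eps_m = sum_{a <= F p^r, p not dividing a} (-1)^a psi(a) a^m   (mod p^(r-1)).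
  On the right-hand side Delta_c^k produces the factor (a^c - 1)^k, which is divisible by p^k
  by Fermat.  Letting r grow exhibits Delta_c^k eps_{n,chi} / p^k as a p-adic limit of elements
  of Z[chi]; the values of psi are themselves such limits because omega(a) = lim a^(p^r).
*)

theory Submission
  imports Defs "HOL-Algebra.Finite_Extensions" "HOL-Algebra.Algebraic_Closure_Type"
begin

hide_const (open) Divisibility.prime Polynomials.degree up_ring.coeff up_ring.monom Coset.order

section \<open>Dirichlet characters and their primitive versions\<close>

lemma dirichlet_char_pos: "dirichlet_char m \<chi> \<Longrightarrow> m > 0"
  by (simp add: dirichlet_char_def)

lemma dirichlet_char_mult: "dirichlet_char m \<chi> \<Longrightarrow> \<chi> (a * b) = \<chi> a * \<chi> b"
  by (simp add: dirichlet_char_def)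

lemma dirichlet_char_1 [simp]: "dirichlet_char m \<chi> \<Longrightarrow> \<chi> (Suc 0) = 1"
  by (simp add: dirichlet_char_def)

lemma dirichlet_char_eq_0_iff: "dirichlet_char m \<chi> \<Longrightarrow> \<chi> a = 0 \<longleftrightarrow> \<not> coprime a m"
  by (simp add: dirichlet_char_def)

lemma dirichlet_char_add_mult: "dirichlet_char m \<chi> \<Longrightarrow> \<chi> (a + m * q) = \<chi> a"
proof (induction q)
  case (Suc q)
  then have "\<chi> ((a + m * q) + m) = \<chi> (a + m * q)" by (simp add: dirichlet_char_def)
  then show ?case using Suc by (simp add: algebra_simps)
qed simp

lemma dirichlet_char_cong: "dirichlet_char m \<chi> \<Longrightarrow> [a = b] (mod m) \<Longrightarrow> \<chi> a = \<chi> b"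
proof -
  assume "dirichlet_char m \<chi>" "[a = b] (mod m)"
  moreover have "\<chi> c = \<chi> (c mod m)" for c
    using dirichlet_char_add_mult[OF \<open>dirichlet_char m \<chi>\<close>, of "c mod m" "c div m"] by simp
  ultimately show "\<chi> a = \<chi> b" by (metis cong_def)
qed

lemma dirichlet_char_root_of_unity:
  assumes "dirichlet_char m \<chi>" "coprime a m" shows "\<chi> a ^ totient m = 1"
proof -
  have "\<chi> a ^ n = \<chi> (a ^ n)" for n
    using assms(1) by (induction n) (simp_all add: dirichlet_char_mult)
  also have "\<chi> (a ^ totient m) = \<chi> 1" using assms(1) euler_theorem[OF assms(2)] by (rule dirichlet_char_cong)
  finally show ?thesis using assms(1) by simp
qed

lemma coprime_lift_mod_divisor:
  fixes M F x :: nat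
  assumes "M > 0" "F dvd M" "coprime x F"
  shows "\<exists>b. [b = x] (mod F) \<and> coprime b M"
proof -
  define S where "S = {q. prime q \<and> q dvd M \<and> \<not> q dvd x}"
  have "finite S"
    using assms(1) by (intro finite_subset[of S "{..M}"]) (auto simp: S_def dest: dvd_imp_le)
  then have dvd_prod_S: "q dvd \<Prod>S \<longleftrightarrow> q \<in> S" if "prime q" for q
    using that prime_dvd_prod_iff[of S q id] by (auto simp: S_def dest: primes_dvd_imp_eq)
  define b where "b = x + F * \<Prod>S"
  have "\<not> q dvd b" if q: "prime q" "q dvd M" for q
  proof
    assume "q dvd b"
    show False
    proof (cases "q dvd x")
      case True
      then have "\<not> q dvd F" using assms(3) q(1) by (metis coprime_common_divisor not_prime_unit)
      moreover have "\<not> q dvd \<Prod>S" using True dvd_prod_S[OF q(1)] by (simp add: S_def)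
      ultimately show False
        using \<open>q dvd b\<close> True q(1) by (simp add: b_def dvd_add_right_iff prime_dvd_mult_iff)
    next
      case False
      then have "q dvd F * \<Prod>S" using dvd_prod_S[OF q(1)] q by (simp add: S_def)
      then show False using \<open>q dvd b\<close> False by (simp add: b_def dvd_add_left_iff)
    qed
  qed
  then have "coprime b M"
    by (metis coprime_commute prime_factor_nat coprime_iff_gcd_eq_1 gcd_dvd1 gcd_dvd2 dvd_trans)
  moreover have "[b = x] (mod F)" by (simp add: b_def cong_def)
  ultimately show ?thesis by blast
qed

lemma cong_solve_two_moduli:
  fixes m n a b :: nat
  assumes "m > 0" "n > 0" "[a = b] (mod gcd m n)"
  shows "\<exists>x. [x = a] (mod m) \<and> [x = b] (mod n)"
proof -
  obtain u v :: int where uv: "u * int m + v * int n = gcd (int m) (int n)"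
    using bezout_int by blast
  obtain s where s: "int a - int b = int (gcd m n) * s"
    using assms(3) by (metis cong_int_iff cong_iff_dvd_diff dvdE)
  define x where "x = int b + v * int n * s"
  have "x - int a = v * int n * s - int (gcd m n) * s"
    using s by (simp add: x_def algebra_simps)
  also have "\<dots> = - (u * int m * s)"
    by (simp add: uv[symmetric] algebra_simps flip: gcd_int_int_eq)
  finally have "x - int a = - (u * int m * s)" .
  then have "[x = int a] (mod int m)" "[x = int b] (mod int n)"
    by (simp_all add: x_def cong_iff_dvd_diff)
  moreover have "[int (nat (x mod (int m * int n))) = x] (mod int m * int n)"
    using assms by (simp add: cong_def)
  ultimately show ?thesis
    by (metis cong_dvd_modulus cong_int_iff cong_trans dvd_triv_left dvd_triv_right)
qed

lemma coprime_lcm_right_iff: "coprime a (lcm b c) \<longleftrightarrow> coprime a b \<and> coprime a c"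
  for a b c :: nat
proof
  assume "coprime a (lcm b c)"
  then show "coprime a b \<and> coprime a c"
    using coprime_divisors[OF dvd_refl dvd_lcm1] coprime_divisors[OF dvd_refl dvd_lcm2] by blast
next
  assume "coprime a b \<and> coprime a c"
  then have "coprime a (b * c)" by simp
  moreover have "lcm b c dvd b * c" by (intro lcm_least) auto
  ultimately show "coprime a (lcm b c)" using coprime_divisors[OF dvd_refl] by blast
qed

definition defined_mod :: "nat \<Rightarrow> (nat \<Rightarrow> complex) \<Rightarrow> nat \<Rightarrow> bool" where
  "defined_mod M g d \<longleftrightarrow> d dvd M \<and> (\<forall>a. coprime a M \<and> [a = 1] (mod d) \<longrightarrow> g a = 1)"

lemma defined_mod_self: "dirichlet_char M g \<Longrightarrow> defined_mod M g M"
  using dirichlet_char_cong[of M g _ 1] by (auto simp: defined_mod_def)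

lemma defined_mod_cong:
  assumes g: "dirichlet_char M g" and d: "defined_mod M g d"
    and b: "coprime b M" "coprime b' M" "[b = b'] (mod d)"
  shows "g b = g b'"
proof -
  obtain c where c: "[b * c = 1] (mod M)" using cong_solve_coprime_nat[OF b(1)] by auto
  then have "coprime c M" using cong_imp_coprime[OF cong_sym[OF c]] by simp
  have gbc: "g b * g c = 1" using dirichlet_char_cong[OF g c] g by (simp add: dirichlet_char_mult)
  have "[b' * c = 1] (mod d)"
    using cong_trans[OF cong_mult[OF cong_sym[OF b(3)] cong_refl] cong_dvd_modulus_nat[OF c]] d
    by (simp add: defined_mod_def)
  moreover have "coprime (b' * c) M" using b(2) \<open>coprime c M\<close> by simp
  ultimately have "g (b' * c) = 1" using d unfolding defined_mod_def by blast
  then have "g b' * g c = 1" using g by (simp add: dirichlet_char_mult)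
  with gbc show ?thesis by (metis mult.commute mult.left_neutral mult.assoc)
qed

definition descend_char :: "nat \<Rightarrow> (nat \<Rightarrow> complex) \<Rightarrow> nat \<Rightarrow> nat \<Rightarrow> complex" where
  "descend_char M g d x =
     (if coprime x d then g (SOME b. [b = x] (mod d) \<and> coprime b M) else 0)"

lemma descend_char_eq:
  assumes g: "dirichlet_char M g" and d: "defined_mod M g d"
    and b: "[b = x] (mod d)" "coprime b M"
  shows "descend_char M g d x = g b"
proof -
  have "coprime b d" using b(2) d coprime_divisors[OF dvd_refl] by (auto simp: defined_mod_def)
  then have x: "coprime x d" using cong_imp_coprime[OF b(1)] by blast
  define b0 where "b0 = (SOME b. [b = x] (mod d) \<and> coprime b M)"
  have "\<exists>b. [b = x] (mod d) \<and> coprime b M" using b by blast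
  then have "[b0 = x] (mod d) \<and> coprime b0 M"
    unfolding b0_def by (rule someI_ex)
  then have b0: "[b0 = x] (mod d)" "coprime b0 M" by auto
  have "g b0 = g b"
    by (rule defined_mod_cong[OF g d b0(2) b(2) cong_trans[OF b0(1) cong_sym[OF b(1)]]])
  then show ?thesis using x by (simp add: descend_char_def b0_def)
qed

lemma descend_char_lift:
  assumes g: "dirichlet_char M g" and d: "defined_mod M g d" and x: "coprime x d"
  obtains b where "[b = x] (mod d)" "coprime b M" "descend_char M g d x = g b"
  using coprime_lift_mod_divisor[OF dirichlet_char_pos[OF g] _ x] d descend_char_eq[OF g d]
  by (metis defined_mod_def)

lemma descend_char_mult:
  assumes g: "dirichlet_char M g" and d: "defined_mod M g d"
  shows "descend_char M g d (a * b) = descend_char M g d a * descend_char M g d b"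
proof (cases "coprime a d \<and> coprime b d")
  case True
  then obtain ba bb where "[ba = a] (mod d)" "coprime ba M" "descend_char M g d a = g ba"
    "[bb = b] (mod d)" "coprime bb M" "descend_char M g d b = g bb"
    using descend_char_lift[OF g d] by metis
  then show ?thesis
    using descend_char_eq[OF g d cong_mult, of ba a bb b] g by (simp add: dirichlet_char_mult)
qed (auto simp: descend_char_def)

lemma dirichlet_char_descend_char:
  assumes g: "dirichlet_char M g" and d: "defined_mod M g d"
  shows "dirichlet_char d (descend_char M g d)"
  unfolding dirichlet_char_def
proof (intro conjI allI descend_char_mult[OF g d])
  show "d > 0" using d dirichlet_char_pos[OF g] by (auto simp: defined_mod_def intro: Nat.gr0I)
next
  fix a
  show "descend_char M g d (a + d) = descend_char M g d a"
  proof (cases "coprime a d")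
    case True
    then obtain b where "[b = a] (mod d)" "coprime b M" "descend_char M g d a = g b"
      using descend_char_lift[OF g d] by metis
    moreover have "[b = a + d] (mod d)" using calculation(1) by (simp add: cong_def)
    ultimately show ?thesis using descend_char_eq[OF g d] by simp
  next
    case False
    moreover have "coprime (a + d) d \<longleftrightarrow> coprime a d"
      by (rule coprime_cong_cong_left) (simp add: cong_def)
    ultimately show ?thesis by (simp add: descend_char_def)
  qed
next
  fix a
  show "descend_char M g d a = 0 \<longleftrightarrow> \<not> coprime a d"
  proof (cases "coprime a d")
    case True
    then obtain b where "coprime b M" "descend_char M g d a = g b"
      using descend_char_lift[OF g d] by metis
    then show ?thesis using True g by (simp add: dirichlet_char_eq_0_iff)
  qed (simp add: descend_char_def)
next
  show "descend_char M g d 1 = 1"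
    using descend_char_eq[OF g d cong_refl, of 1] g by simp
qed

definition is_assoc_prim :: "nat \<Rightarrow> (nat \<Rightarrow> complex) \<Rightarrow> nat \<Rightarrow> (nat \<Rightarrow> complex) \<Rightarrow> bool" where
  "is_assoc_prim M g F \<psi> \<longleftrightarrow> F dvd M \<and> primitive_char F \<psi> \<and> (\<forall>a. coprime a M \<longrightarrow> \<psi> a = g a)"

lemma is_assoc_prim_exists:
  assumes g: "dirichlet_char M g"
  shows "\<exists>F \<psi>. is_assoc_prim M g F \<psi>"
proof -
  define F where "F = (LEAST d. defined_mod M g d)"
  have F: "defined_mod M g F"
    unfolding F_def using defined_mod_self[OF g] by (rule LeastI)
  have "primitive_char F (descend_char M g F)"
    unfolding primitive_char_def
  proof (intro conjI notI dirichlet_char_descend_char[OF g F])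
    assume "\<exists>d. d dvd F \<and> d < F \<and>
      (\<forall>a. coprime a F \<and> [a = 1] (mod d) \<longrightarrow> descend_char M g F a = 1)"
    then obtain d where d: "d dvd F" "d < F"
      "\<And>a. coprime a F \<Longrightarrow> [a = 1] (mod d) \<Longrightarrow> descend_char M g F a = 1" by blast
    have "defined_mod M g d"
      unfolding defined_mod_def
    proof (intro conjI allI impI)
      show "d dvd M" using d(1) F by (auto simp: defined_mod_def)
      fix a assume a: "coprime a M \<and> [a = 1] (mod d)"
      then have "coprime a F" using F coprime_divisors[OF dvd_refl] by (auto simp: defined_mod_def)
      then show "g a = 1" using a d(3)[of a] descend_char_eq[OF g F cong_refl, of a] by simp
    qed
    then have "F \<le> d" unfolding F_def by (rule Least_le)
    then show False using d(2) by simp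
  qed
  then show ?thesis
    using F descend_char_eq[OF g F cong_refl] unfolding is_assoc_prim_def defined_mod_def by blast
qed

lemma is_assoc_prim_lift:
  assumes g: "dirichlet_char M g" and F: "is_assoc_prim M g F \<psi>" and x: "coprime x F"
  obtains b where "[b = x] (mod F)" "coprime b M" "\<psi> x = g b"
proof -
  have "F dvd M" "dirichlet_char F \<psi>" "\<And>a. coprime a M \<Longrightarrow> \<psi> a = g a"
    using F by (auto simp: is_assoc_prim_def primitive_char_def)
  moreover obtain b where "[b = x] (mod F)" "coprime b M"
    using coprime_lift_mod_divisor[OF dirichlet_char_pos[OF g] _ x] calculation by blast
  ultimately show ?thesis using that dirichlet_char_cong[of F \<psi> x b] by (metis cong_sym)
qed

lemma is_assoc_prim_defined_mod:
  assumes "is_assoc_prim M g F \<psi>" shows "defined_mod M g F"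
  unfolding defined_mod_def
proof (intro conjI allI impI)
  have \<psi>: "dirichlet_char F \<psi>" using assms by (simp add: is_assoc_prim_def primitive_char_def)
  show "F dvd M" using assms by (simp add: is_assoc_prim_def)
  fix a assume a: "coprime a M \<and> [a = 1] (mod F)"
  then have "\<psi> a = \<psi> 1" using dirichlet_char_cong[OF \<psi>] by blast
  moreover have "\<psi> a = g a" using assms a by (simp add: is_assoc_prim_def)
  ultimately show "g a = 1" using \<psi> by simp
qed

lemma defined_mod_gcd:
  assumes g: "dirichlet_char M g" and d1: "defined_mod M g d1" and d2: "defined_mod M g d2"
  shows "defined_mod M g (gcd d1 d2)"
  unfolding defined_mod_def
proof (intro conjI allI impI)
  have M: "M > 0" using g by (rule dirichlet_char_pos)
  then have pos: "d1 > 0" "d2 > 0" using d1 d2 by (auto simp: defined_mod_def intro: Nat.gr0I)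
  show "gcd d1 d2 dvd M" using d1 by (auto simp: defined_mod_def)
  fix a assume a: "coprime a M \<and> [a = 1] (mod gcd d1 d2)"
  then obtain x where x: "[x = a] (mod d1)" "[x = 1] (mod d2)"
    using cong_solve_two_moduli[OF pos] by blast
  have "coprime a d1" using a d1 coprime_divisors[OF dvd_refl] by (auto simp: defined_mod_def)
  then have "coprime x d1" "coprime x d2"
    using cong_imp_coprime[OF cong_sym[OF x(1)]] cong_imp_coprime[OF cong_sym[OF x(2)]] by auto
  then have "coprime x (lcm d1 d2)" by (simp add: coprime_lcm_right_iff)
  moreover have "lcm d1 d2 dvd M" using d1 d2 by (simp add: defined_mod_def)
  ultimately obtain b where b: "[b = x] (mod lcm d1 d2)" "coprime b M"
    using coprime_lift_mod_divisor[OF M] by blast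
  have "[b = a] (mod d1)" "[b = 1] (mod d2)"
    using cong_trans[OF cong_dvd_modulus_nat[OF b(1)]] x by auto
  then show "g a = 1"
    using defined_mod_cong[OF g d1 _ b(2)] d2 a b(2) by (auto simp: defined_mod_def cong_sym)
qed

lemma is_assoc_prim_minimal:
  assumes g: "dirichlet_char M g" and F: "is_assoc_prim M g F \<psi>"
    and d: "defined_mod M g d" "d dvd F"
  shows "d = F"
proof (rule ccontr)
  assume "d \<noteq> F"
  have "F > 0" using F by (auto simp: is_assoc_prim_def primitive_char_def dirichlet_char_def)
  then have "d < F" using d(2) \<open>d \<noteq> F\<close> by (simp add: dvd_imp_le le_neq_implies_less)
  moreover have "\<psi> a = 1" if a: "coprime a F" "[a = 1] (mod d)" for a
  proof -
    obtain b where b: "[b = a] (mod F)" "coprime b M" "\<psi> a = g b"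
      using is_assoc_prim_lift[OF g F a(1)] by blast
    then have "[b = 1] (mod d)" using a(2) d(2) by (metis cong_dvd_modulus_nat cong_trans)
    then show ?thesis using b(2,3) d(1) by (simp add: defined_mod_def)
  qed
  ultimately show False using F d(2) by (auto simp: is_assoc_prim_def primitive_char_def)
qed

lemma is_assoc_prim_unique:
  assumes g: "dirichlet_char M g" and F1: "is_assoc_prim M g F1 \<psi>1" and F2: "is_assoc_prim M g F2 \<psi>2"
  shows "F1 = F2 \<and> \<psi>1 = \<psi>2"
proof
  have "defined_mod M g (gcd F1 F2)"
    using defined_mod_gcd[OF g is_assoc_prim_defined_mod[OF F1] is_assoc_prim_defined_mod[OF F2]] .
  then show "F1 = F2"
    using is_assoc_prim_minimal[OF g F1] is_assoc_prim_minimal[OF g F2] by (metis gcd_dvd1 gcd_dvd2)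
  have "\<psi>1 x = \<psi>2 x" for x
  proof (cases "coprime x F1")
    case True
    then obtain b where b: "[b = x] (mod F1)" "coprime b M" "\<psi>1 x = g b"
      using is_assoc_prim_lift[OF g F1] by blast
    have "\<psi>2 x = \<psi>2 b"
      using F2 b(1) \<open>F1 = F2\<close> dirichlet_char_cong[of F2 \<psi>2 x b]
      by (simp add: is_assoc_prim_def primitive_char_def cong_sym)
    then show ?thesis using F2 b by (simp add: is_assoc_prim_def)
  next
    case False
    have "dirichlet_char F1 \<psi>1" "dirichlet_char F1 \<psi>2"
      using F1 F2 \<open>F1 = F2\<close> by (auto simp: is_assoc_prim_def primitive_char_def)
    then have "\<psi>1 x = 0" "\<psi>2 x = 0" using False by (simp_all add: dirichlet_char_eq_0_iff)
    then show ?thesis by simp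
  qed
  then show "\<psi>1 = \<psi>2" ..
qed

lemma assoc_prim_is_assoc_prim:
  assumes g: "dirichlet_char M g" and eq: "assoc_prim M g = (F, \<psi>)"
  shows "is_assoc_prim M g F \<psi>"
proof -
  obtain F' \<psi>' where s: "is_assoc_prim M g F' \<psi>'" using is_assoc_prim_exists[OF g] by blast
  have "assoc_prim M g = (F', \<psi>')"
    unfolding assoc_prim_def
  proof (rule the_equality)
    fix x assume "case x of (F, \<psi>) \<Rightarrow> F dvd M \<and> primitive_char F \<psi> \<and> (\<forall>a. coprime a M \<longrightarrow> \<psi> a = g a)"
    then have "is_assoc_prim M g (fst x) (snd x)" by (cases x) (simp add: is_assoc_prim_def)
    then show "x = (F', \<psi>')" using is_assoc_prim_unique[OF g _ s] by (cases x) auto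
  qed (use s in \<open>simp add: is_assoc_prim_def\<close>)
  then show ?thesis using s eq by simp
qed

section \<open>Generalized Euler numbers\<close>

definition alt_exp_sum :: "(nat \<Rightarrow> complex) \<Rightarrow> nat \<Rightarrow> complex fps" where
  "alt_exp_sum \<psi> M = (\<Sum>a=1..M. fps_const (2 * (-1) ^ a * \<psi> a) * fps_exp (of_nat a))"

definition alt_power_sum :: "(nat \<Rightarrow> complex) \<Rightarrow> nat \<Rightarrow> nat \<Rightarrow> complex" where
  "alt_power_sum \<psi> M n = (\<Sum>a=1..M. (-1) ^ a * \<psi> a * of_nat a ^ n)"

lemma alternating_geometric_sum:
  fixes e :: "'a :: comm_ring_1"
  shows "(e + 1) * (\<Sum>j<L. (-1) ^ j * e ^ j) = 1 - (-1) ^ L * e ^ L"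
  by (induction L) (simp_all add: algebra_simps)

lemma alt_exp_sum_mult:
  assumes \<psi>: "dirichlet_char F \<psi>" and F: "odd F"
  shows "alt_exp_sum \<psi> (F * L) = alt_exp_sum \<psi> F * (\<Sum>j<L. (-1) ^ j * fps_exp (of_nat F) ^ j)"
proof (induction L)
  case (Suc L)
  define t where "t a = fps_const (2 * (-1) ^ a * \<psi> a) * fps_exp (of_nat a :: complex)" for a
  have t: "t (a + F * L) = t a * ((-1) ^ L * fps_exp (of_nat F) ^ L)" for a
  proof -
    have "(-1 :: complex) ^ (a + F * L) = (-1) ^ a * (-1) ^ L"
      using F by (simp add: power_add power_mult)
    moreover have "fps_exp (of_nat (a + F * L) :: complex) = fps_exp (of_nat a) * fps_exp (of_nat F) ^ L"
      by (simp add: fps_exp_power_mult fps_exp_add_mult[symmetric] algebra_simps)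
    moreover have "fps_const ((-1 :: complex) ^ L) = (-1) ^ L"
      by (simp add: fps_const_neg[symmetric] fps_const_power[symmetric])
    ultimately show ?thesis
      using dirichlet_char_add_mult[OF \<psi>, of a L]
      by (simp add: t_def fps_const_mult[symmetric] mult_ac del: fps_const_mult)
  qed
  have "alt_exp_sum \<psi> (F * Suc L) = alt_exp_sum \<psi> (F * L) + (\<Sum>a=F * L + 1..F * L + F. t a)"
    unfolding alt_exp_sum_def t_def by (subst sum.ub_add_nat[symmetric]) (simp_all add: add.commute)
  also have "(\<Sum>a=F * L + 1..F * L + F. t a) = (\<Sum>a=1..F. t (a + F * L))"
    using sum.shift_bounds_cl_nat_ivl[of t 1 "F * L" F] by (simp add: add.commute)
  also have "\<dots> = (\<Sum>a=1..F. t a * ((-1) ^ L * fps_exp (of_nat F) ^ L))"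
    by (simp only: t)
  also have "\<dots> = alt_exp_sum \<psi> F * ((-1) ^ L * fps_exp (of_nat F) ^ L)"
    by (simp add: alt_exp_sum_def t_def sum_distrib_right)
  finally show ?case using Suc by (simp add: algebra_simps)
qed (simp add: alt_exp_sum_def)

lemma gen_euler_alt_exp_sum:
  "gen_euler F \<psi> n = fact n * (alt_exp_sum \<psi> F / (fps_exp (of_nat F) + 1)) $ n"
  by (simp add: gen_euler_def alt_exp_sum_def)

(* For odd L, e^(F L t) + 1 is divisible by e^(F t) + 1, so the generating function of the
   E_{n,psi} can also be written with period F L instead of F. *)
lemma euler_gf_mult:
  assumes \<psi>: "dirichlet_char F \<psi>" and F: "odd F" and L: "odd L"
  shows "alt_exp_sum \<psi> F / (fps_exp (of_nat F) + 1) * (fps_exp (of_nat (F * L)) + 1)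
    = alt_exp_sum \<psi> (F * L)"
proof -
  define E where "E = fps_exp (of_nat F :: complex)"
  have "fps_exp (of_nat (F * L)) + 1 = (E + 1) * (\<Sum>j<L. (-1) ^ j * E ^ j)"
    using alternating_geometric_sum[of E L] L by (simp add: E_def fps_exp_power_mult mult.commute)
  moreover have "alt_exp_sum \<psi> F / (E + 1) * (E + 1) = alt_exp_sum \<psi> F"
    by (simp add: E_def fps_divide_unit mult.assoc inverse_mult_eq_1)
  ultimately show ?thesis
    using alt_exp_sum_mult[OF \<psi> F] by (simp add: E_def mult.assoc[symmetric])
qed

lemma gen_euler_recurrence:
  assumes \<psi>: "dirichlet_char F \<psi>" and F: "odd F" and L: "odd L"
  shows "2 * gen_euler F \<psi> n + (\<Sum>i<n. of_nat (n choose i) * of_nat (F * L) ^ (n - i) * gen_euler F \<psi> i)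
    = 2 * alt_power_sum \<psi> (F * L) n"
proof -
  define G where "G = alt_exp_sum \<psi> F / (fps_exp (of_nat F) + 1)"
  define M where "M = F * L"
  have "(G * (fps_exp (of_nat M) + 1)) $ n = alt_exp_sum \<psi> M $ n"
    using euler_gf_mult[OF \<psi> F L] by (simp add: G_def M_def)
  then have "fact n * (G $ n + (\<Sum>i\<le>n. G $ i * (of_nat M ^ (n - i) / fact (n - i))))
      = fact n * alt_exp_sum \<psi> M $ n"
    by (simp add: algebra_simps fps_mult_nth atLeast0AtMost)
  moreover have "fact n * (G $ i * (of_nat M ^ (n - i) / fact (n - i))) =
      of_nat (n choose i) * of_nat M ^ (n - i) * gen_euler F \<psi> i" if "i \<le> n" for i
    using binomial_fact[OF that, where 'a = complex]
    by (simp add: gen_euler_alt_exp_sum G_def field_simps)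
  moreover have "fact n * alt_exp_sum \<psi> M $ n = 2 * alt_power_sum \<psi> M n"
    by (simp add: alt_exp_sum_def alt_power_sum_def fps_sum_nth sum_distrib_left
        sum_distrib_right field_simps)
  ultimately show ?thesis
    by (simp add: distrib_left sum_distrib_left gen_euler_alt_exp_sum G_def M_def
        lessThan_Suc_atMost[symmetric]) (simp add: mult.left_commute)
qed

lemma delta_op_diff:
  "delta_op c k (\<lambda>i. a i - b i) n = delta_op c k a n - delta_op c k b n"
  by (simp add: delta_op_def algebra_simps sum_subtractf)

section \<open>Algebraic numbers\<close>

(* HOL's polynomial library proves closure of the algebraic numbers only under negation and
   inversion; closure under + and * is read off from HOL-Algebra's subfield of elements
   algebraic over the rationals. *)
definition complex_ring :: "complex ring" where
  "complex_ring = ring_of_type_algebra"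

lemma field_complex_ring: "field complex_ring"
  unfolding complex_ring_def by (rule field_from_type_algebra)

interpretation complex_ring: cring complex_ring
  using field_complex_ring by (simp add: field_def domain_def)

lemma complex_ring_simps [simp]:
  "carrier complex_ring = UNIV" "mult complex_ring = (*)" "add complex_ring = (+)"
  "zero complex_ring = 0" "one complex_ring = 1"
  by (auto simp: complex_ring_def ring_of_type_algebra_def)

lemma complex_ring_pow [simp]: "x [^]\<^bsub>complex_ring\<^esub> (n::nat) = x ^ n"
  by (induction n) auto

lemma complex_ring_uminus [simp]: "\<ominus>\<^bsub>complex_ring\<^esub> x = - x"
  by (rule complex_ring.add.inv_equality) auto

lemma complex_ring_inv [simp]: "x \<noteq> 0 \<Longrightarrow> inv\<^bsub>complex_ring\<^esub> x = inverse x"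
  by (rule complex_ring.comm_inv_char) auto

lemma complex_ring_eval: "complex_ring.eval l x = poly (Poly (rev l)) x"
proof (induction l)
  case (Cons a l)
  have "Poly (rev (a # l)) = Poly (rev l) + monom a (length l)"
    by (simp add: Poly_append monom_altdef)
  then show ?case using Cons by (simp add: poly_monom)
qed simp

lemma Rats_subfield_complex_ring: "subfield (\<rat> :: complex set) complex_ring"
  by (intro field.subfieldI'[OF field_complex_ring] complex_ring.subringI) auto

lemma algebraic_iff_not_transcendental:
  "algebraic (x::complex) \<longleftrightarrow> \<not> complex_ring.transcendental \<rat> x"
proof
  assume "algebraic x"
  then obtain q where q: "\<And>i. coeff q i \<in> \<rat>" "q \<noteq> 0" "poly q x = 0"
    unfolding algebraic_altdef by blast
  define l where "l = rev (coeffs q)"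
  have "Poly (rev l) = q" by (simp add: l_def)
  then have "complex_ring.eval l x = 0" using q by (simp add: complex_ring_eval)
  moreover have "l \<noteq> []" "set l \<subseteq> \<rat>" "hd l \<noteq> 0"
    using q by (auto simp: l_def coeffs_def hd_rev last_coeffs_eq_coeff_degree)
  ultimately show "\<not> complex_ring.transcendental \<rat> x"
    using complex_ring.algebraicI[of l \<rat> x]
    by (auto simp: over_def univ_poly_def polynomial_def)
next
  assume "\<not> complex_ring.transcendental \<rat> x"
  then obtain l where l: "l \<in> carrier (\<rat>[X]\<^bsub>complex_ring\<^esub>)" "l \<noteq> []" "complex_ring.eval l x = 0"
    using domain.algebraicE[OF field.axioms(1)[OF field_complex_ring] subfieldE(1)[OF Rats_subfield_complex_ring], of x]
    by (auto simp: over_def)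
  have sl: "set l \<subseteq> \<rat>" "hd l \<noteq> 0" using l by (auto simp: univ_poly_def polynomial_def)
  define q where "q = Poly (rev l)"
  have "q \<noteq> 0"
  proof
    assume "q = 0"
    then obtain n where "rev l = replicate n 0" by (auto simp: q_def Poly_eq_0)
    then have "last (rev l) = 0" using l(2) by (cases n) auto
    then show False using sl l(2) by (simp add: last_rev)
  qed
  moreover have "coeff q i \<in> \<rat>" for i
    using sl by (auto simp: q_def nth_default_def rev_nth)
  ultimately show "algebraic x"
    using l(3) by (intro algebraicI'[of q]) (auto simp: q_def complex_ring_eval)
qed

lemma subfield_algebraic: "subfield {x::complex. algebraic x} complex_ring"
  using field.subfield_of_algebraics[OF field_complex_ring Rats_subfield_complex_ring]
  by (simp add: over_def algebraic_iff_not_transcendental)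

lemma algebraic_add [intro]: "algebraic (x::complex) \<Longrightarrow> algebraic y \<Longrightarrow> algebraic (x + y)"
  using subringE(7)[OF subfieldE(1)[OF subfield_algebraic]] by simp

lemma algebraic_mult [intro]: "algebraic (x::complex) \<Longrightarrow> algebraic y \<Longrightarrow> algebraic (x * y)"
  using subringE(6)[OF subfieldE(1)[OF subfield_algebraic]] by simp

lemma algebraic_diff [intro]: "algebraic (x::complex) \<Longrightarrow> algebraic y \<Longrightarrow> algebraic (x - y)"
  using algebraic_add[of x "- y"] by auto

lemma algebraic_of_nat [simp, intro]: "algebraic (of_nat m :: complex)"
  by (rule rat_imp_algebraic) simp

lemma algebraic_power [intro]: "algebraic (x::complex) \<Longrightarrow> algebraic (x ^ n)"
  by (induction n) auto

lemma algebraic_sum [intro]: "(\<And>i. i \<in> A \<Longrightarrow> algebraic (f i :: complex)) \<Longrightarrow> algebraic (sum f A)"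
  by (induction A rule: infinite_finite_induct) auto

lemma algebraic_prod [intro]: "(\<And>i. i \<in> A \<Longrightarrow> algebraic (f i :: complex)) \<Longrightarrow> algebraic (prod f A)"
  by (induction A rule: infinite_finite_induct) auto

lemma algebraic_root_of_unity: "z ^ m = (1::complex) \<Longrightarrow> m > 0 \<Longrightarrow> algebraic z"
  by (rule algebraicI[of "monom 1 m - 1"])
     (auto simp: poly_monom Polynomial.coeff_monom of_nat_diff split: if_splits
       dest: arg_cong[where f="\<lambda>q. coeff q m"])

lemma power_minus_one_eq_prod_roots:
  assumes "m > 0"
  obtains e :: "complex \<Rightarrow> nat" where "\<And>x. x ^ m - 1 = (\<Prod>z | z ^ m = 1. (x - z) ^ e z)"
proof -
  define P :: "complex poly" where "P = monom 1 m - 1"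
  have coeff: "coeff P m = 1" using assms by (simp add: P_def)
  have "degree P \<le> m" unfolding P_def
    by (rule order.trans[OF degree_diff_le_max]) (auto simp: degree_monom_le)
  with coeff have "degree P = m" by (simp add: antisym le_degree)
  with coeff have "Polynomial.smult 1 (\<Prod>z | poly P z = 0. [:-z, 1:] ^ order z P) = P"
    using complex_poly_decompose[of P] by simp
  then have "poly P x = (\<Prod>z | poly P z = 0. (x - z) ^ order z P)" for x
    by (metis (no_types, lifting) poly_prod poly_smult mult_1 poly_power prod.cong
        poly_pCons poly_0 mult_zero_right add_0_right mult_1_right diff_conv_add_uminus add.commute)
  moreover have "poly P z = 0 \<longleftrightarrow> z ^ m = 1" for z by (simp add: P_def poly_monom)
  ultimately have "poly P x = (\<Prod>z | z ^ m = 1. (x - z) ^ order z P)" for x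
    by simp
  then show ?thesis by (intro that) (simp add: P_def poly_monom)
qed

section \<open>The p-adic absolute value and the Teichmueller character\<close>

locale padic_abs =
  fixes p :: nat and N :: "complex \<Rightarrow> real"
  assumes prime_p: "prime p" and padic_abs_ext: "padic_abs_ext p N"
begin

lemma p_gt_1: "p > 1"
  using prime_gt_1_nat[OF prime_p] .

lemma p_pos [simp]: "p > 0"
  using p_gt_1 by simp

lemma N_nonneg: "algebraic x \<Longrightarrow> N x \<ge> 0"
  using padic_abs_ext unfolding padic_abs_ext_def by blast

lemma N_eq_0_iff: "algebraic x \<Longrightarrow> N x = 0 \<longleftrightarrow> x = 0"
  using padic_abs_ext unfolding padic_abs_ext_def by blast

lemma N_mult: "algebraic x \<Longrightarrow> algebraic y \<Longrightarrow> N (x * y) = N x * N y"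
  using padic_abs_ext unfolding padic_abs_ext_def by blast

lemma N_add_le_max: "algebraic x \<Longrightarrow> algebraic y \<Longrightarrow> N (x + y) \<le> max (N x) (N y)"
  using padic_abs_ext unfolding padic_abs_ext_def by blast

lemma N_of_int: "m \<noteq> 0 \<Longrightarrow> N (of_int m) = real p powr (- real (multiplicity (int p) m))"
  using padic_abs_ext unfolding padic_abs_ext_def by blast

lemma N_0 [simp]: "N 0 = 0"
  using N_eq_0_iff[of 0] by simp

lemma N_1 [simp]: "N 1 = 1"
  using N_of_int[of 1] by simp

lemma N_uminus [simp]: "algebraic x \<Longrightarrow> N (- x) = N x"
  using N_mult[of "-1" x] N_of_int[of "-1"] p_pos by (simp add: multiplicity_unit_right)

lemma N_minus_commute: "algebraic x \<Longrightarrow> algebraic y \<Longrightarrow> N (x - y) = N (y - x)"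
  using N_uminus[of "y - x"] by auto

lemma N_diff_le_max: "algebraic x \<Longrightarrow> algebraic y \<Longrightarrow> N (x - y) \<le> max (N x) (N y)"
  using N_add_le_max[of x "- y"] by auto

lemma N_add_less: "algebraic x \<Longrightarrow> algebraic y \<Longrightarrow> N x < e \<Longrightarrow> N y < e \<Longrightarrow> N (x + y) < e"
  using N_add_le_max[of x y] by linarith

lemma N_power: "algebraic x \<Longrightarrow> N (x ^ n) = N x ^ n"
  by (induction n) (auto simp: N_mult algebraic_power)

lemma N_prod: "(\<And>i. i \<in> A \<Longrightarrow> algebraic (f i)) \<Longrightarrow> N (prod f A) = (\<Prod>i\<in>A. N (f i))"
  by (induction A rule: infinite_finite_induct) (auto simp: N_mult algebraic_prod)

lemma N_inverse: "algebraic x \<Longrightarrow> N (inverse x) = inverse (N x)"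
proof (cases "x = 0")
  case False
  assume "algebraic x"
  then have "N x * N (inverse x) = 1"
    using N_mult[of x "inverse x"] False by auto
  then show ?thesis by (metis inverse_unique)
qed simp

lemma N_of_int_le_if_dvd: "int p ^ j dvd m \<Longrightarrow> N (of_int m) \<le> inverse (real p ^ j)"
proof (cases "m = 0")
  case False
  assume "int p ^ j dvd m"
  then have "multiplicity (int p) m \<ge> j"
    using False p_gt_1 by (intro multiplicity_geI) auto
  then have "real p powr (- real (multiplicity (int p) m)) \<le> real p powr (- real j)"
    using p_gt_1 by (intro powr_mono) auto
  then show ?thesis using N_of_int[OF False] p_gt_1 by (simp add: powr_minus powr_realpow)
qed simp

lemma N_of_int_le_1: "N (of_int m) \<le> 1"
  using N_of_int_le_if_dvd[of 0 m] by simp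

lemma N_of_nat_le_1: "N (of_nat m) \<le> 1"
  using N_of_int_le_1[of "int m"] by simp

lemma N_of_nat_eq_1: "\<not> p dvd m \<Longrightarrow> N (of_nat m) = 1"
  using N_of_int[of "int m"] by (cases "m = 0") (auto simp: not_dvd_imp_multiplicity_0)

lemma N_of_nat_mult_power_le: "N (of_nat (a * p ^ j)) \<le> inverse (real p ^ j)"
  using N_of_int_le_if_dvd[of j "int (a * p ^ j)"] by simp

lemma N_of_nat_power_p: "N (of_nat p ^ j) = inverse (real p ^ j)"
proof -
  have "N (of_nat p) = inverse (real p)"
    using N_of_int[of "int p"] p_gt_1 prime_p
    by (simp add: powr_minus multiplicity_self prime_imp_prime_elem)
  then show ?thesis by (simp add: N_power power_inverse)
qed

lemma N_of_nat_diff_le_if_cong: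
  "[a = b] (mod p ^ j) \<Longrightarrow> N (of_nat a - of_nat b) \<le> inverse (real p ^ j)"
  using N_of_int_le_if_dvd[of j "int a - int b"]
  by (simp add: cong_int_iff[symmetric] cong_iff_dvd_diff of_nat_power)

lemma inverse_p_less_1: "inverse (real p) < 1"
  using less_imp_inverse_less[of 1 "real p"] p_gt_1 by simp

lemma N_root_of_unity: "z ^ m = 1 \<Longrightarrow> m > 0 \<Longrightarrow> N z = 1"
  using N_power[of z m] N_nonneg[of z] algebraic_root_of_unity[of z m]
    power_eq_iff_eq_base[of m "N z" 1] by simp

definition padic_int :: "complex \<Rightarrow> bool" where
  "padic_int x \<longleftrightarrow> algebraic x \<and> N x \<le> 1"

lemma padic_int_algebraic [dest]: "padic_int x \<Longrightarrow> algebraic x"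
  by (simp add: padic_int_def)

lemma padic_int_of_int [simp, intro]: "padic_int (of_int m)"
  by (simp add: padic_int_def N_of_int_le_1)

lemma padic_int_of_nat [simp, intro]: "padic_int (of_nat m)"
  by (simp add: padic_int_def N_of_nat_le_1)

lemma padic_int_0 [simp, intro]: "padic_int 0"
  using padic_int_of_nat[of 0] by simp

lemma padic_int_1 [simp, intro]: "padic_int 1"
  using padic_int_of_nat[of 1] by simp

lemma padic_int_add [intro]: "padic_int x \<Longrightarrow> padic_int y \<Longrightarrow> padic_int (x + y)"
  unfolding padic_int_def using N_add_le_max[of x y] by auto

lemma padic_int_mult [intro]: "padic_int x \<Longrightarrow> padic_int y \<Longrightarrow> padic_int (x * y)"
  unfolding padic_int_def using N_nonneg by (auto simp: N_mult intro!: mult_le_one)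

lemma padic_int_uminus [intro]: "padic_int x \<Longrightarrow> padic_int (- x)"
  unfolding padic_int_def by auto

lemma padic_int_diff [intro]: "padic_int x \<Longrightarrow> padic_int y \<Longrightarrow> padic_int (x - y)"
  using padic_int_add[of x "- y"] by auto

lemma padic_int_power [intro]: "padic_int x \<Longrightarrow> padic_int (x ^ n)"
  by (induction n) auto

lemma padic_int_sum [intro]: "(\<And>i. i \<in> A \<Longrightarrow> padic_int (f i)) \<Longrightarrow> padic_int (sum f A)"
  by (induction A rule: infinite_finite_induct) auto

lemma padic_int_root_of_unity: "z ^ m = 1 \<Longrightarrow> m > 0 \<Longrightarrow> padic_int z"
  unfolding padic_int_def using algebraic_root_of_unity N_root_of_unity by auto

lemma N_mult_le: "padic_int a \<Longrightarrow> algebraic x \<Longrightarrow> N (a * x) \<le> N x"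
  unfolding padic_int_def using N_nonneg[of x] N_nonneg[of a]
  by (simp add: N_mult mult_left_le_one_le)

lemma N_sum_le:
  assumes "\<And>i. i \<in> A \<Longrightarrow> algebraic (f i) \<and> N (f i) \<le> B" and "B \<ge> 0"
  shows "N (sum f A) \<le> B"
  using assms
proof (induction A rule: infinite_finite_induct)
  case (insert x A)
  then have "N (f x + sum f A) \<le> max (N (f x)) (N (sum f A))"
    by (intro N_add_le_max) auto
  also have "\<dots> \<le> B" using insert by auto
  finally show ?case using insert by simp
qed auto

lemma N_power_diff_le:
  assumes "padic_int u" "padic_int v" shows "N (u ^ j - v ^ j) \<le> N (u - v)"
proof (induction j)
  case 0
  then show ?case using assms N_nonneg[of "u - v"] by auto
next
  case (Suc j)
  have "u ^ Suc j - v ^ Suc j = u * (u ^ j - v ^ j) + v ^ j * (u - v)"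
    by (simp add: algebra_simps)
  moreover have pv: "padic_int (v ^ j)" "padic_int (u ^ j - v ^ j)" "padic_int (u - v)"
    using assms by auto
  moreover have "N (u * (u ^ j - v ^ j)) \<le> N (u - v)"
    using N_mult_le[OF assms(1) padic_int_algebraic[OF pv(2)]] Suc by linarith
  moreover have "N (v ^ j * (u - v)) \<le> N (u - v)"
    using N_mult_le[OF pv(1) padic_int_algebraic[OF pv(3)]] .
  ultimately show ?case
    using assms N_add_le_max[of "u * (u ^ j - v ^ j)" "v ^ j * (u - v)"]
    by (simp add: padic_int_algebraic algebraic_mult del: power_Suc)
qed

lemma padic_int_dirichlet_char: "dirichlet_char m \<chi> \<Longrightarrow> padic_int (\<chi> a)"
  using dirichlet_char_root_of_unity[of m \<chi> a] dirichlet_char_pos[of m \<chi>]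
  by (cases "coprime a m")
     (auto simp: dirichlet_char_eq_0_iff[symmetric] intro: padic_int_root_of_unity[of _ "totient m"])

lemma N_delta_op_le:
  assumes "\<And>i. algebraic (a i) \<and> N (a i) \<le> B" and "B \<ge> 0"
  shows "N (delta_op c k a n) \<le> B"
  unfolding delta_op_def
proof (rule N_sum_le[OF _ assms(2)])
  fix j
  have "padic_int (of_nat (k choose j) * (-1) ^ (k - j))" by auto
  then show "algebraic (of_nat (k choose j) * (- 1) ^ (k - j) * a (n + j * c)) \<and>
      N (of_nat (k choose j) * (- 1) ^ (k - j) * a (n + j * c)) \<le> B"
    using assms(1)[of "n + j * c"] N_mult_le by (meson algebraic_mult order.trans padic_int_algebraic)
qed

lemma N_prod_less_1_imp:
  assumes "\<And>i. i \<in> A \<Longrightarrow> algebraic (f i)" and "N (prod f A) < 1"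
  shows "\<exists>i\<in>A. N (f i) < 1"
proof (rule ccontr)
  assume "\<not> ?thesis"
  then have "(\<Prod>i\<in>A. N (f i)) \<ge> 1" by (intro prod_ge_1) auto
  then show False using assms by (simp add: N_prod)
qed

(* (z^m - w^m) / (z - w) = 0 is congruent to the unit m w^(m-1) modulo z - w. *)
lemma roots_of_unity_eq_if_close:
  assumes z: "z ^ m = 1" and w: "w ^ m = 1" and m: "m > 0" "\<not> p dvd m"
    and close: "N (z - w) < 1"
  shows "z = w"
proof (rule ccontr)
  assume "z \<noteq> w"
  have pz: "padic_int z" "padic_int w"
    using padic_int_root_of_unity z w m by auto
  obtain l where l: "m = Suc l" using m by (cases m) auto
  define S where "S = (\<Sum>i<m. z ^ i * w ^ (l - i))"
  have "(z - w) * S = 0" using z w diff_power_eq_sum[of z l w] by (simp add: S_def l)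
  then have "S = 0" using \<open>z \<noteq> w\<close> by simp
  have "S - of_nat m * w ^ l = (\<Sum>i<m. (z ^ i - w ^ i) * w ^ (l - i))"
    by (simp add: S_def l algebra_simps sum_subtractf power_add [symmetric])
  also have "N \<dots> \<le> N (z - w)"
  proof (rule N_sum_le)
    fix i
    have "N (w ^ (l - i) * (z ^ i - w ^ i)) \<le> N (z - w)"
      using pz N_power_diff_le[of z w i] N_mult_le[of "w ^ (l - i)" "z ^ i - w ^ i"] by force
    then show "algebraic ((z ^ i - w ^ i) * w ^ (l - i)) \<and> N ((z ^ i - w ^ i) * w ^ (l - i)) \<le> N (z - w)"
      using pz by (auto simp: mult.commute)
  qed (use pz in \<open>auto intro!: N_nonneg\<close>)
  finally have "N (- (of_nat m * w ^ l)) < 1"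
    using \<open>S = 0\<close> close by simp
  then have "N (of_nat m * w ^ l) < 1"
    using pz by (simp add: algebraic_power algebraic_mult padic_int_algebraic)
  moreover have "N (of_nat m * w ^ l) = 1"
    using pz m N_of_nat_eq_1[of m] N_root_of_unity[OF w]
    by (simp add: N_mult N_power algebraic_power padic_int_algebraic)
  ultimately show False by simp
qed

(* By Fermat a^(p-1) - 1, the product of the (a - z)^(e z), is small; hence so is some factor. *)
lemma teich_exists:
  assumes "\<not> p dvd a"
  shows "\<exists>z. z ^ (p - 1) = 1 \<and> N (z - of_nat a) < 1"
proof -
  have pm: "p - 1 > 0" using p_gt_1 by simp
  obtain e where e: "\<And>x::complex. x ^ (p - 1) - 1 = (\<Prod>z | z ^ (p - 1) = 1. (x - z) ^ e z)"
    using power_minus_one_eq_prod_roots[OF pm] by metis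
  have "[a ^ (p - 1) = 1] (mod p ^ 1)" using fermat_theorem[OF prime_p assms] by simp
  then have "N (of_nat a ^ (p - 1) - 1) < 1"
    using N_of_nat_diff_le_if_cong[of "a ^ (p - 1)" 1 1] inverse_p_less_1 by simp
  then have "N (\<Prod>z | z ^ (p - 1) = 1. (of_nat a - z) ^ e z) < 1"
    using e[of "of_nat a"] by simp
  moreover have root_alg: "algebraic z" if "z ^ (p - 1) = 1" for z :: complex
    using algebraic_root_of_unity[OF that pm] .
  ultimately have "\<exists>z\<in>{z. z ^ (p - 1) = 1}. N ((of_nat a - z) ^ e z) < 1"
    by (intro N_prod_less_1_imp) auto
  then obtain z where z: "z ^ (p - 1) = 1" "N ((of_nat a - z) ^ e z) < 1"
    by blast
  have alg: "algebraic (of_nat a - z)"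
    using algebraic_root_of_unity[OF z(1) pm] by auto
  then have "N (of_nat a - z) ^ e z < 1" using z(2) by (simp add: N_power)
  then have "N (of_nat a - z) < 1"
    using one_le_power[of "N (of_nat a - z)" "e z"] by linarith
  then show ?thesis
    using z(1) alg algebraic_root_of_unity[OF z(1) pm] N_minus_commute[of z "of_nat a"] by auto
qed

lemma teich_ex1: "\<not> p dvd a \<Longrightarrow> \<exists>!z. z ^ (p - 1) = 1 \<and> N (z - of_nat a) < 1"
proof (intro ex_ex1I teich_exists)
  fix z w assume "\<not> p dvd a" and zw: "z ^ (p - 1) = 1 \<and> N (z - of_nat a) < 1"
    "w ^ (p - 1) = 1 \<and> N (w - of_nat a) < 1"
  have "p - 1 > 0" "\<not> p dvd (p - 1)"
    using p_gt_1 by (auto dest: dvd_imp_le)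
  moreover have alg: "algebraic z" "algebraic w"
    using zw calculation by (auto simp: algebraic_root_of_unity)
  then have "N (of_nat a - w) < 1"
    using zw N_minus_commute[of w "of_nat a"] by simp
  then have "N ((z - of_nat a) + (of_nat a - w)) < 1"
    using zw alg by (intro N_add_less) auto
  ultimately show "z = w"
    using zw by (intro roots_of_unity_eq_if_close[of z "p - 1" w]) auto
qed

abbreviation \<omega> :: "nat \<Rightarrow> complex" where
  "\<omega> \<equiv> teich p N"

lemma teich_power_p_minus_1:
  assumes "\<not> p dvd a" shows "\<omega> a ^ (p - 1) = 1"
  using theI'[OF teich_ex1[OF assms]] assms by (auto simp: teich_def)

lemma N_teich_minus_less_1:
  assumes "\<not> p dvd a" shows "N (\<omega> a - of_nat a) < 1"
  using theI'[OF teich_ex1[OF assms]] assms by (auto simp: teich_def)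

lemma teich_eqI:
  assumes "\<not> p dvd a" "z ^ (p - 1) = 1" "N (z - of_nat a) < 1"
  shows "\<omega> a = z"
  using teich_ex1[OF assms(1)] teich_power_p_minus_1[OF assms(1)]
    N_teich_minus_less_1[OF assms(1)] assms(2,3) by blast

lemma teich_dvd [simp]: "p dvd a \<Longrightarrow> \<omega> a = 0"
  by (simp add: teich_def)

lemma teich_eq_0_iff: "\<omega> a = 0 \<longleftrightarrow> p dvd a"
proof (cases "p dvd a")
  case False
  then have "\<omega> a ^ (p - 1) = 1" by (rule teich_power_p_minus_1)
  then show ?thesis using False p_gt_1 by (auto simp: zero_power)
qed (simp add: teich_def)

lemma padic_int_teich: "padic_int (\<omega> a)"
proof (cases "p dvd a")
  case True
  then show ?thesis by simp
next
  case False
  then show ?thesis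
    using teich_power_p_minus_1 p_gt_1 by (intro padic_int_root_of_unity[of _ "p - 1"]) auto
qed

lemma teich_1: "\<omega> 1 = 1"
  using p_gt_1 by (intro teich_eqI) auto

lemma teich_mult: "\<omega> (a * b) = \<omega> a * \<omega> b"
proof (cases "p dvd a \<or> p dvd b")
  case True
  then show ?thesis by auto
next
  case False
  have pa: "padic_int (\<omega> a)" "padic_int (\<omega> b)" "padic_int (\<omega> a - of_nat a)" "padic_int (\<omega> b - of_nat b)"
    using padic_int_teich by auto
  have "N (\<omega> a * (\<omega> b - of_nat b)) < 1"
    using N_mult_le[OF pa(1) padic_int_algebraic[OF pa(4)]] N_teich_minus_less_1[of b] False by auto
  moreover have "N (of_nat b * (\<omega> a - of_nat a)) < 1"
    using N_mult_le[OF padic_int_of_nat padic_int_algebraic[OF pa(3)]] N_teich_minus_less_1[of a] False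
    by (meson le_less_trans)
  ultimately have "N (\<omega> a * (\<omega> b - of_nat b) + of_nat b * (\<omega> a - of_nat a)) < 1"
    using pa by (intro N_add_less) auto
  moreover have "\<omega> a * (\<omega> b - of_nat b) + of_nat b * (\<omega> a - of_nat a) = \<omega> a * \<omega> b - of_nat (a * b)"
    by (simp add: algebra_simps)
  moreover have "(\<omega> a * \<omega> b) ^ (p - 1) = 1"
    using False teich_power_p_minus_1 by (simp add: power_mult_distrib)
  moreover have "\<not> p dvd (a * b)"
    using False prime_p by (simp add: prime_dvd_mult_iff)
  ultimately show ?thesis by (intro teich_eqI) auto
qed

lemma teich_cong:
  assumes "[a = b] (mod p)"
  shows "\<omega> a = \<omega> b"
proof (cases "p dvd b")
  case True
  then show ?thesis using assms by (simp add: cong_dvd_iff)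
next
  case False
  have "N (of_nat b - of_nat a) < 1"
    using N_of_nat_diff_le_if_cong[of b a 1] assms inverse_p_less_1 by (simp add: cong_sym_eq)
  then have "N ((\<omega> b - of_nat b) + (of_nat b - of_nat a)) < 1"
    using False padic_int_teich N_teich_minus_less_1 by (intro N_add_less) auto
  then show ?thesis
    using False assms teich_power_p_minus_1 by (intro teich_eqI) (auto simp: cong_dvd_iff)
qed

lemma N_binomial_term_le:
  assumes d: "padic_int d" and v: "padic_int v" and k: "0 < k" "k < p"
  shows "N (of_nat (p choose k) * d ^ k * v ^ (p - k)) \<le> N d / real p"
proof -
  have "int p ^ 1 dvd int (p choose k)"
    using dvd_choose_prime[of k p] k prime_p by simp
  then have c: "N (of_nat (p choose k)) \<le> inverse (real p)"
    using N_of_int_le_if_dvd[of 1 "int (p choose k)"] by simp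
  have Nd: "0 \<le> N d" "N d \<le> 1" "0 \<le> N (v ^ (p - k))" "N (v ^ (p - k)) \<le> 1"
    using d padic_int_power[OF v, of "p - k"] N_nonneg by (auto simp: padic_int_def)
  have "N d ^ k \<le> N d ^ 1"
    using Nd k by (intro power_decreasing) auto
  moreover have "0 \<le> N (d ^ k)" using Nd d by (simp add: N_power padic_int_def)
  ultimately have "N (d ^ k) * N (v ^ (p - k)) \<le> N d * 1"
    using Nd d by (intro mult_mono) (auto simp: N_power padic_int_def)
  have "N (of_nat (p choose k) * d ^ k * v ^ (p - k))
      = N (of_nat (p choose k)) * (N (d ^ k) * N (v ^ (p - k)))"
    using d v by (simp add: N_mult algebraic_mult algebraic_power padic_int_def mult.assoc)
  also have "\<dots> \<le> inverse (real p) * N d"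
    using c Nd \<open>0 \<le> N (d ^ k)\<close> \<open>N (d ^ k) * N (v ^ (p - k)) \<le> N d * 1\<close>
    by (intro mult_mono) auto
  also have "\<dots> = N d / real p" by (simp add: divide_inverse)
  finally show ?thesis .
qed

lemma N_power_p_diff_le:
  assumes u: "padic_int u" and v: "padic_int v"
  shows "N (u ^ p - v ^ p) \<le> max (N (u - v) ^ p) (N (u - v) / real p)"
proof -
  define d where "d = u - v"
  have d: "padic_int d" using u v by (auto simp: d_def)
  have "u ^ p = (d + v) ^ p" by (simp add: d_def)
  also have "\<dots> = (\<Sum>k\<le>p. of_nat (p choose k) * d ^ k * v ^ (p - k))" by (rule binomial_ring)
  also have "\<dots> = v ^ p + (\<Sum>k\<in>{1..p}. of_nat (p choose k) * d ^ k * v ^ (p - k))"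
    by (simp add: atMost_atLeast0 sum.atLeast_Suc_atMost)
  finally have "u ^ p - v ^ p = (\<Sum>k\<in>{1..p}. of_nat (p choose k) * d ^ k * v ^ (p - k))"
    by simp
  also have "N \<dots> \<le> max (N d ^ p) (N d / real p)"
  proof (rule N_sum_le)
    fix k assume k: "k \<in> {1..p}"
    show "algebraic (of_nat (p choose k) * d ^ k * v ^ (p - k)) \<and>
        N (of_nat (p choose k) * d ^ k * v ^ (p - k)) \<le> max (N d ^ p) (N d / real p)"
    proof (cases "k = p")
      case True
      then show ?thesis using d by (auto simp: N_power padic_int_def)
    next
      case False
      then show ?thesis
        using k d v N_binomial_term_le[OF d v, of k] by auto
    qed
  qed (use d N_nonneg in \<open>auto simp: le_max_iff_disj\<close>)
  finally show ?thesis by (simp add: d_def)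
qed

lemma N_power_p_diff_le_contract:
  assumes u: "padic_int u" and v: "padic_int v" and \<delta>: "N (u - v) \<le> \<delta>"
  shows "N (u ^ p - v ^ p) \<le> max (\<delta> ^ (p - 1)) (inverse (real p)) * N (u - v)"
proof -
  define d where "d = N (u - v)"
  have d0: "0 \<le> d"
    using N_nonneg[OF padic_int_algebraic[OF padic_int_diff[OF u v]]] by (simp add: d_def)
  have "d ^ p = d * d ^ (p - 1)" using p_pos by (cases p) auto
  also have "\<dots> \<le> d * \<delta> ^ (p - 1)"
    using d0 \<delta> by (intro mult_left_mono power_mono) (auto simp: d_def)
  also have "\<dots> \<le> d * max (\<delta> ^ (p - 1)) (inverse (real p))"
    using d0 by (intro mult_left_mono) auto
  finally have "max (d ^ p) (d / real p) \<le> max (\<delta> ^ (p - 1)) (inverse (real p)) * d"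
    using d0 mult_left_mono[OF max.cobounded2 d0, of "inverse (real p)" "\<delta> ^ (p - 1)"]
    by (simp add: divide_inverse mult.commute)
  then show ?thesis using N_power_p_diff_le[OF u v] unfolding d_def by (meson order.trans)
qed

(* a \<mapsto> a^p contracts the p-adic integers near \<omega> a towards this fixed point. *)
lemma teich_approx:
  assumes a: "\<not> p dvd a" and e: "e > 0"
  shows "\<exists>r. N (\<omega> a - of_nat a ^ (p ^ r)) < e"
proof -
  define \<delta> where "\<delta> = N (\<omega> a - of_nat a)"
  define \<rho> where "\<rho> = max (\<delta> ^ (p - 1)) (inverse (real p))"
  have t: "padic_int (\<omega> a)" by (rule padic_int_teich)
  have \<delta>: "0 \<le> \<delta>" "\<delta> < 1"
    using N_nonneg[OF padic_int_algebraic[OF padic_int_diff[OF t padic_int_of_nat]]]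
      N_teich_minus_less_1[OF a] by (auto simp: \<delta>_def)
  have "\<delta> ^ (p - 1) < 1" using \<delta> p_gt_1 by (simp add: power_less_one_iff)
  then have \<rho>: "0 \<le> \<rho>" "\<rho> < 1" using inverse_p_less_1 by (auto simp: \<rho>_def le_max_iff_disj)
  have "\<omega> a ^ p = \<omega> a"
    using teich_power_p_minus_1[OF a] p_pos by (metis power_minus_mult mult_1)
  then have bound: "N (\<omega> a - of_nat a ^ (p ^ r)) \<le> \<rho> ^ r * \<delta>" for r
  proof (induction r)
    case (Suc r)
    have "\<rho> ^ r * \<delta> \<le> \<delta>" using \<rho> \<delta> by (simp add: mult_left_le_one_le power_le_one)
    with Suc have "N (\<omega> a - of_nat a ^ p ^ r) \<le> \<delta>" by simp
    then have "N (\<omega> a ^ p - (of_nat a ^ p ^ r) ^ p) \<le> \<rho> * N (\<omega> a - of_nat a ^ p ^ r)"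
      unfolding \<rho>_def using t by (intro N_power_p_diff_le_contract) auto
    also have "\<dots> \<le> \<rho> * (\<rho> ^ r * \<delta>)" using Suc \<rho> by (intro mult_left_mono) auto
    finally show ?case using Suc.prems by (simp add: power_mult[symmetric] mult_ac)
  qed (simp add: \<delta>_def)
  obtain r where "\<rho> ^ r < e" using real_arch_pow_inv[OF e \<rho>(2)] by blast
  moreover have "\<rho> ^ r * \<delta> \<le> \<rho> ^ r" using \<rho> \<delta> by (simp add: mult_left_le)
  ultimately show ?thesis using bound[of r] by (meson le_less_trans order.trans)
qed

end

section \<open>Congruences for the Euler numbers\<close>

locale odd_padic_abs = padic_abs +
  assumes odd_p: "odd p"
begin

lemma padic_int_half: "padic_int (1 / 2)"
proof -
  have "\<not> p dvd 2"
  proof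
    assume "p dvd 2"
    then have "p = 2" using p_gt_1 dvd_imp_le[of p 2] by simp
    then show False using odd_p by simp
  qed
  then have "N 2 = 1" using N_of_nat_eq_1[of 2] by simp
  moreover have "algebraic (1 / 2 :: complex)" by (rule rat_imp_algebraic) simp
  ultimately show ?thesis using N_inverse[of 2] by (simp add: padic_int_def inverse_eq_divide)
qed

lemma padic_int_alt_power_sum: "dirichlet_char m \<psi> \<Longrightarrow> padic_int (alt_power_sum \<psi> M n)"
  unfolding alt_power_sum_def using padic_int_dirichlet_char by (intro padic_int_sum padic_int_mult) auto

lemma padic_int_gen_euler:
  assumes \<psi>: "dirichlet_char F \<psi>" and F: "odd F"
  shows "padic_int (gen_euler F \<psi> n)"
proof (induction n rule: less_induct)
  case (less n)
  have "gen_euler F \<psi> n = alt_power_sum \<psi> F n -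
      1 / 2 * (\<Sum>i<n. of_nat (n choose i) * of_nat F ^ (n - i) * gen_euler F \<psi> i)"
    using gen_euler_recurrence[OF \<psi> F, of 1 n] by (simp add: field_simps)
  moreover have "padic_int (\<Sum>i<n. of_nat (n choose i) * of_nat F ^ (n - i) * gen_euler F \<psi> i)"
    using less by (intro padic_int_sum padic_int_mult padic_int_power) auto
  then have "padic_int (alt_power_sum \<psi> F n -
      1 / 2 * (\<Sum>i<n. of_nat (n choose i) * of_nat F ^ (n - i) * gen_euler F \<psi> i))"
    using padic_int_alt_power_sum[OF \<psi>] padic_int_half by blast
  ultimately show ?case by simp
qed

lemma gen_euler_cong_alt_power_sum:
  assumes \<psi>: "dirichlet_char F \<psi>" and F: "odd F" and L: "odd L"
  obtains y where "padic_int y" "gen_euler F \<psi> n - alt_power_sum \<psi> (F * L) n = of_nat (F * L) * y"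
proof
  define M where "M = F * L"
  define y where "y = - 1 / 2 * (\<Sum>i<n. of_nat (n choose i) * of_nat M ^ (n - i - 1) * gen_euler F \<psi> i)"
  show "padic_int y"
    unfolding y_def using padic_int_gen_euler[OF \<psi> F] padic_int_half
    by (intro padic_int_mult padic_int_uminus padic_int_sum padic_int_power) auto
  have "(\<Sum>i<n. of_nat (n choose i) * of_nat M ^ (n - i) * gen_euler F \<psi> i)
      = of_nat M * (\<Sum>i<n. of_nat (n choose i) * of_nat M ^ (n - i - 1) * gen_euler F \<psi> i)"
    unfolding sum_distrib_left
  proof (intro sum.cong refl)
    fix i assume "i \<in> {..<n}"
    then have "n - i = Suc (n - i - 1)" by simp
    then have "(of_nat M :: complex) ^ (n - i) = of_nat M * of_nat M ^ (n - i - 1)"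
      by (metis power_Suc)
    then show "of_nat (n choose i) * of_nat M ^ (n - i) * gen_euler F \<psi> i =
        of_nat M * (of_nat (n choose i) * of_nat M ^ (n - i - 1) * gen_euler F \<psi> i)"
      by (simp add: mult_ac)
  qed
  then show "gen_euler F \<psi> n - alt_power_sum \<psi> (F * L) n = of_nat (F * L) * y"
    using gen_euler_recurrence[OF \<psi> F L, of n] by (simp add: y_def M_def field_simps)
qed

definition units_upto :: "nat \<Rightarrow> nat \<Rightarrow> nat set" where
  "units_upto F m = {a \<in> {1..F * p ^ m}. \<not> p dvd a}"

definition unit_power_sum :: "(nat \<Rightarrow> complex) \<Rightarrow> nat \<Rightarrow> nat \<Rightarrow> nat \<Rightarrow> complex" where
  "unit_power_sum \<psi> F m n = (\<Sum>a\<in>units_upto F m. (-1) ^ a * \<psi> a * of_nat a ^ n)"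

definition euler_eps :: "nat \<Rightarrow> (nat \<Rightarrow> complex) \<Rightarrow> nat \<Rightarrow> complex" where
  "euler_eps F \<psi> n = (1 - \<psi> p * of_nat p ^ n) * gen_euler F \<psi> n"

lemma alt_power_sum_split:
  assumes \<psi>: "dirichlet_char F \<psi>" and m: "m \<ge> 1"
  shows "alt_power_sum \<psi> (F * p ^ m) n
    = unit_power_sum \<psi> F m n + \<psi> p * of_nat p ^ n * alt_power_sum \<psi> (F * p ^ (m - 1)) n"
proof -
  define K where "K = F * p ^ (m - 1)"
  define h where "h a = (-1) ^ a * \<psi> a * (of_nat a :: complex) ^ n" for a
  have FK: "F * p ^ m = p * K" using m by (simp add: K_def power_eq_if mult_ac)
  have "{1..F * p ^ m} \<inter> {a. p dvd a} = (\<lambda>b. p * b) ` {1..K}"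
    using FK by (auto simp: Suc_le_eq elim!: dvdE intro!: image_eqI)
  moreover have "{1..F * p ^ m} - {a. p dvd a} = units_upto F m" by (auto simp: units_upto_def)
  moreover have "sum h ((\<lambda>b. p * b) ` {1..K}) = (\<Sum>b=1..K. h (p * b))"
    using p_pos by (intro sum.reindex_cong[of "\<lambda>b. p * b"] inj_on_mult) auto
  moreover have "h (p * b) = \<psi> p * of_nat p ^ n * h b" for b
  proof -
    have "(-1 :: complex) ^ (p * b) = (-1) ^ b" using odd_p by (simp add: power_mult)
    then show ?thesis using \<psi> by (simp add: h_def dirichlet_char_mult power_mult_distrib mult_ac)
  qed
  ultimately have "sum h {1..F * p ^ m} = unit_power_sum \<psi> F m n + (\<Sum>b=1..K. \<psi> p * of_nat p ^ n * h b)"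
    using sum.Int_Diff[of "{1..F * p ^ m}" h "{a. p dvd a}"]
    by (simp add: unit_power_sum_def h_def)
  then show ?thesis by (simp add: alt_power_sum_def h_def K_def sum_distrib_left)
qed

(* A Riemann-sum form of the p-adic integral representation of eps_n. *)
lemma N_euler_eps_minus_unit_power_sum:
  assumes \<psi>: "dirichlet_char F \<psi>" and F: "odd F" and m: "m \<ge> 1"
  shows "N (euler_eps F \<psi> n - unit_power_sum \<psi> F m n) \<le> inverse (real p ^ (m - 1))"
proof -
  obtain y1 where y1: "padic_int y1"
      "gen_euler F \<psi> n - alt_power_sum \<psi> (F * p ^ m) n = of_nat (F * p ^ m) * y1"
    using gen_euler_cong_alt_power_sum[OF \<psi> F, of "p ^ m"] odd_p by auto
  obtain y2 where y2: "padic_int y2"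
      "gen_euler F \<psi> n - alt_power_sum \<psi> (F * p ^ (m - 1)) n = of_nat (F * p ^ (m - 1)) * y2"
    using gen_euler_cong_alt_power_sum[OF \<psi> F, of "p ^ (m - 1)"] odd_p by auto
  define P where "P = \<psi> p * of_nat p ^ n"
  have P: "padic_int P" using padic_int_dirichlet_char[OF \<psi>] by (auto simp: P_def)
  have "euler_eps F \<psi> n - unit_power_sum \<psi> F m n
      = y1 * of_nat (F * p ^ m) - P * y2 * of_nat (F * p ^ (m - 1))"
    using alt_power_sum_split[OF \<psi> m, of n] y1(2) y2(2)
    by (simp add: euler_eps_def P_def algebra_simps)
  also have "N \<dots> \<le> inverse (real p ^ (m - 1))"
  proof (rule order.trans[OF N_diff_le_max max.boundedI])
    have "inverse (real p ^ m) \<le> inverse (real p ^ (m - 1))"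
      using p_gt_1 by (intro le_imp_inverse_le power_increasing) auto
    then show "N (y1 * of_nat (F * p ^ m)) \<le> inverse (real p ^ (m - 1))"
      using N_mult_le[OF y1(1)] N_of_nat_mult_power_le[of F m] by (meson algebraic_of_nat order.trans)
    show "N (P * y2 * of_nat (F * p ^ (m - 1))) \<le> inverse (real p ^ (m - 1))"
      using N_mult_le[OF padic_int_mult[OF P y2(1)]] N_of_nat_mult_power_le[of F "m - 1"]
      by (meson algebraic_of_nat order.trans)
  qed (use y1 y2 P in auto)
  finally show ?thesis .
qed

(* Delta_c^k turns a^n into a^n (a^c - 1)^k, and p divides a^c - 1 when p does not divide a. *)
definition delta_quotient_sum :: "(nat \<Rightarrow> complex) \<Rightarrow> nat \<Rightarrow> nat \<Rightarrow> nat \<Rightarrow> nat \<Rightarrow> nat \<Rightarrow> complex" where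
  "delta_quotient_sum \<psi> F m n c k = (\<Sum>a\<in>units_upto F m. (-1) ^ a * \<psi> a * of_nat a ^ n *
      of_int ((int a ^ c - 1) div int p) ^ k)"

lemma delta_unit_power_sum:
  assumes c: "(p - 1) dvd c"
  shows "delta_op c k (unit_power_sum \<psi> F m) n = of_nat p ^ k * delta_quotient_sum \<psi> F m n c k"
proof -
  have "(\<Sum>j\<le>k. of_nat (k choose j) * (-1) ^ (k - j) * ((-1) ^ a * \<psi> a * of_nat a ^ (n + j * c)))
      = of_nat p ^ k * ((-1) ^ a * \<psi> a * of_nat a ^ n * of_int ((int a ^ c - 1) div int p) ^ k)"
    if a: "a \<in> units_upto F m" for a
  proof -
    obtain t where t: "c = (p - 1) * t" using c by (elim dvdE)
    have "[a ^ (p - 1) = 1] (mod p)" using fermat_theorem[OF prime_p] a by (simp add: units_upto_def)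
    then have "[(a ^ (p - 1)) ^ t = 1 ^ t] (mod p)" by (rule cong_pow)
    then have "[a ^ c = 1] (mod p)" by (simp add: t power_mult)
    then have "[int a ^ c = int 1] (mod int p)"
      using cong_int_iff[of "a ^ c" 1 p] by simp
    then have "int a ^ c - 1 = int p * ((int a ^ c - 1) div int p)"
      by (simp add: cong_iff_dvd_diff)
    then have "(of_int (int a ^ c - 1) :: complex) = of_int (int p * ((int a ^ c - 1) div int p))"
      by (rule arg_cong)
    then have "(of_nat a :: complex) ^ c - 1 = of_nat p * of_int ((int a ^ c - 1) div int p)"
      by simp
    moreover have "(of_nat a :: complex) ^ (n + j * c) = of_nat a ^ n * (of_nat a ^ c) ^ j" for j
      by (simp add: power_add power_mult mult.commute)
    ultimately show ?thesis
      using binomial_ring[of "(of_nat a :: complex) ^ c" "-1" k]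
      by (simp add: sum_distrib_left power_mult_distrib mult_ac)
  qed
  then show ?thesis
    unfolding delta_op_def unit_power_sum_def delta_quotient_sum_def
    by (simp add: sum_distrib_left sum.swap[of _ "units_upto F m"])
qed

lemma padic_int_euler_eps:
  "dirichlet_char F \<psi> \<Longrightarrow> odd F \<Longrightarrow> padic_int (euler_eps F \<psi> n)"
  unfolding euler_eps_def using padic_int_dirichlet_char padic_int_gen_euler by blast

lemma padic_int_unit_power_sum: "dirichlet_char F \<psi> \<Longrightarrow> padic_int (unit_power_sum \<psi> F m n)"
  unfolding unit_power_sum_def using padic_int_dirichlet_char by blast

lemma N_delta_euler_eps_approx:
  assumes \<psi>: "dirichlet_char F \<psi>" and F: "odd F" and c: "(p - 1) dvd c"
  shows "N (delta_op c k (euler_eps F \<psi>) n / of_nat p ^ k - delta_quotient_sum \<psi> F (Suc j) n c k)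
    \<le> real p ^ k / real p ^ j"
proof -
  define D where "D = delta_op c k (\<lambda>i. euler_eps F \<psi> i - unit_power_sum \<psi> F (Suc j) i) n"
  have "D = delta_op c k (euler_eps F \<psi>) n - of_nat p ^ k * delta_quotient_sum \<psi> F (Suc j) n c k"
    unfolding D_def delta_op_diff delta_unit_power_sum[OF c] ..
  then have eq: "delta_op c k (euler_eps F \<psi>) n / of_nat p ^ k - delta_quotient_sum \<psi> F (Suc j) n c k
      = D * inverse (of_nat p ^ k)"
    by (simp add: field_simps)
  have "N D \<le> inverse (real p ^ j)"
    unfolding D_def
    using N_euler_eps_minus_unit_power_sum[OF \<psi> F, of "Suc j"]
      padic_int_euler_eps[OF \<psi> F] padic_int_unit_power_sum[OF \<psi>]
    by (intro N_delta_op_le) (auto intro!: padic_int_algebraic)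
  moreover have "algebraic D"
    unfolding D_def delta_op_def
    using padic_int_euler_eps[OF \<psi> F] padic_int_unit_power_sum[OF \<psi>] by blast
  then have "N (D * inverse (of_nat p ^ k)) = N D * real p ^ k"
    using N_of_nat_power_p[of k] N_inverse[of "of_nat p ^ k"]
    by (simp add: N_mult algebraic_power algebraic_inverse)
  ultimately show ?thesis
    unfolding eq by (simp add: divide_inverse mult.commute)
qed

end

section \<open>The closure of \<open>\<int>[\<chi>]\<close>\<close>

locale twisted_char = odd_padic_abs +
  fixes f :: nat and \<chi> :: "nat \<Rightarrow> complex"
  assumes primitive_\<chi>: "primitive_char f \<chi>" and odd_f: "odd f"
begin

lemma dirichlet_char_\<chi>: "dirichlet_char f \<chi>"
  using primitive_\<chi> by (simp add: primitive_char_def)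

(* in_Zp_chi restricted to the algebraic numbers, where N is an absolute value. *)
definition in_closure :: "complex \<Rightarrow> bool" where
  "in_closure x \<longleftrightarrow> algebraic x \<and> in_Zp_chi N \<chi> x"

lemma padic_int_zring: "z \<in> zring (range \<chi>) \<Longrightarrow> padic_int z"
  by (induction rule: zring.induct) (auto intro: padic_int_dirichlet_char[OF dirichlet_char_\<chi>])

lemma in_closure_zring: "z \<in> zring (range \<chi>) \<Longrightarrow> in_closure z"
  unfolding in_closure_def in_Zp_chi_def using padic_int_zring[of z] by force

lemma in_closure_of_int [simp, intro]: "in_closure (of_int m)"
  by (intro in_closure_zring zr_int)

lemma in_closure_of_nat [simp, intro]: "in_closure (of_nat m)"
  using in_closure_of_int[of "int m"] by simp

lemma in_closure_0 [simp, intro]: "in_closure 0"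
  using in_closure_of_nat[of 0] by simp

lemma in_closure_1 [simp, intro]: "in_closure 1"
  using in_closure_of_nat[of 1] by simp

lemma in_closure_\<chi> [intro]: "in_closure (\<chi> a)"
  by (intro in_closure_zring zr_gen) simp

lemma in_closure_padic_int: "in_closure x \<Longrightarrow> padic_int x"
proof -
  assume x: "in_closure x"
  then obtain z where z: "z \<in> zring (range \<chi>)" "N (x - z) < 1"
    unfolding in_closure_def in_Zp_chi_def by force
  have "N ((x - z) + z) \<le> max (N (x - z)) (N z)"
    using x padic_int_zring[OF z(1)] by (intro N_add_le_max) (auto simp: in_closure_def)
  then show ?thesis
    using x z padic_int_zring[OF z(1)] by (auto simp: in_closure_def padic_int_def)
qed

lemma in_closure_approx:
  assumes "algebraic y" and "\<And>e. e > 0 \<Longrightarrow> \<exists>u. in_closure u \<and> N (y - u) < e"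
  shows "in_closure y"
  unfolding in_closure_def in_Zp_chi_def
proof (intro conjI allI impI)
  fix e :: real assume "e > 0"
  then obtain u z where "in_closure u" "N (y - u) < e" "z \<in> zring (range \<chi>)" "N (u - z) < e"
    using assms(2) unfolding in_closure_def in_Zp_chi_def by blast
  moreover from this have "N ((y - u) + (u - z)) < e"
    using assms(1) padic_int_zring by (intro N_add_less) (auto simp: in_closure_def)
  ultimately show "\<exists>z\<in>zring (range \<chi>). N (y - z) < e" by auto
qed (rule assms(1))

lemma in_closure_add [intro]: "in_closure x \<Longrightarrow> in_closure y \<Longrightarrow> in_closure (x + y)"
proof (rule in_closure_approx)
  fix e :: real assume x: "in_closure x" and y: "in_closure y" and "e > 0"
  then obtain z w where z: "z \<in> zring (range \<chi>)" "N (x - z) < e"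
    and w: "w \<in> zring (range \<chi>)" "N (y - w) < e"
    unfolding in_closure_def in_Zp_chi_def by blast
  have "N ((x - z) + (y - w)) < e"
    using x y z w padic_int_zring by (intro N_add_less) (auto simp: in_closure_def)
  then show "\<exists>u. in_closure u \<and> N (x + y - u) < e"
    using in_closure_zring[OF zr_add[OF z(1) w(1)]] by (auto simp: algebra_simps)
qed (auto simp: in_closure_def)

lemma in_closure_mult [intro]: "in_closure x \<Longrightarrow> in_closure y \<Longrightarrow> in_closure (x * y)"
proof (rule in_closure_approx)
  fix e :: real assume x: "in_closure x" and y: "in_closure y" and "e > 0"
  then obtain z w where z: "z \<in> zring (range \<chi>)" "N (x - z) < e"
    and w: "w \<in> zring (range \<chi>)" "N (y - w) < e"
    unfolding in_closure_def in_Zp_chi_def by blast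
  have px: "padic_int x" "padic_int w" "algebraic (x - z)" "algebraic (y - w)"
    using x y in_closure_padic_int padic_int_zring[OF w(1)] padic_int_zring[OF z(1)]
    by (auto simp: in_closure_def)
  have "N (x * (y - w) + w * (x - z)) < e"
    using N_mult_le[OF px(1,4)] N_mult_le[OF px(2,3)] z w px by (intro N_add_less) auto
  moreover have "x * (y - w) + w * (x - z) = x * y - z * w" by (simp add: algebra_simps)
  ultimately show "\<exists>u. in_closure u \<and> N (x * y - u) < e"
    using in_closure_zring[OF zr_mult[OF z(1) w(1)]] by auto
qed (auto simp: in_closure_def)

lemma in_closure_uminus [intro]: "in_closure x \<Longrightarrow> in_closure (- x)"
  using in_closure_mult[OF in_closure_of_int[of "-1"], of x] by simp

lemma in_closure_power [intro]: "in_closure x \<Longrightarrow> in_closure (x ^ k)"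
  by (induction k) auto

lemma in_closure_sum [intro]: "(\<And>i. i \<in> A \<Longrightarrow> in_closure (g i)) \<Longrightarrow> in_closure (sum g A)"
  by (induction A rule: infinite_finite_induct) auto

lemma in_closure_teich: "in_closure (\<omega> a)"
proof (cases "p dvd a")
  case False
  show ?thesis
  proof (rule in_closure_approx)
    show "algebraic (\<omega> a)" using padic_int_teich by auto
    fix e :: real assume "e > 0"
    then show "\<exists>u. in_closure u \<and> N (\<omega> a - u) < e"
      using teich_approx[OF False] by blast
  qed
qed simp

lemma in_closure_inverse_teich: "in_closure (inverse (\<omega> a))"
proof (cases "p dvd a")
  case False
  have "\<omega> a * \<omega> a ^ (p - 2) = \<omega> a ^ (p - 1)"
    using odd_p p_gt_1 by (simp flip: power_Suc) (simp add: numeral_2_eq_2 Suc_diff_Suc)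
  then have "inverse (\<omega> a) = \<omega> a ^ (p - 2)"
    using teich_power_p_minus_1[OF False] by (simp add: inverse_unique)
  then show ?thesis using in_closure_teich by auto
qed simp

definition twist :: "nat \<Rightarrow> nat \<Rightarrow> complex" where
  "twist n a = \<chi> a * inverse (\<omega> a) ^ n"

lemma in_closure_twist: "in_closure (twist n a)"
  unfolding twist_def using in_closure_inverse_teich by auto

lemma coprime_lcm_f_p_iff: "coprime a (lcm f p) \<longleftrightarrow> coprime a f \<and> \<not> p dvd a"
proof -
  have "coprime a p \<longleftrightarrow> \<not> p dvd a"
    using prime_imp_coprime[OF prime_p, of a] coprime_absorb_right[of p a] prime_p
    by (auto simp: coprime_commute)
  then show ?thesis by (simp add: coprime_lcm_right_iff)
qed

lemma dirichlet_char_twist: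
  assumes n: "n > 0"
  shows "dirichlet_char (lcm f p) (twist n)"
  unfolding dirichlet_char_def
proof (intro conjI allI)
  show "lcm f p > 0" using dirichlet_char_pos[OF dirichlet_char_\<chi>] by (simp add: lcm_pos_nat)
  show "twist n (a * b) = twist n a * twist n b" for a b
    using dirichlet_char_\<chi> by (simp add: twist_def dirichlet_char_mult teich_mult power_mult_distrib mult_ac)
  show "twist n (a + lcm f p) = twist n a" for a
  proof -
    obtain s where "lcm f p = f * s" by (meson dvdE dvd_lcm1)
    then have "\<chi> (a + lcm f p) = \<chi> a"
      using dirichlet_char_add_mult[OF dirichlet_char_\<chi>] by simp
    moreover obtain t where "lcm f p = p * t" by (meson dvdE dvd_lcm2)
    then have "[a + lcm f p = a] (mod p)" by (simp add: cong_def)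
    ultimately show ?thesis by (simp add: twist_def teich_cong)
  qed
  show "twist n a = 0 \<longleftrightarrow> \<not> coprime a (lcm f p)" for a
    using n dirichlet_char_\<chi> by (auto simp: twist_def coprime_lcm_f_p_iff dirichlet_char_eq_0_iff teich_eq_0_iff)
  show "twist n 1 = 1"
    using teich_1 dirichlet_char_\<chi> by (simp add: twist_def)
qed

lemma twist_add_mult:
  assumes "n > 0" and "(p - 1) dvd c"
  shows "twist (n + j * c) = twist n"
proof
  fix a
  show "twist (n + j * c) a = twist n a"
  proof (cases "p dvd a")
    case False
    obtain t where "c = (p - 1) * t" using assms(2) by (elim dvdE)
    then have "\<omega> a ^ (j * c) = (\<omega> a ^ (p - 1)) ^ (t * j)"
      by (simp add: power_mult[symmetric] mult_ac)
    then have "\<omega> a ^ (j * c) = 1" using teich_power_p_minus_1[OF False] by simp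
    then show ?thesis by (simp add: twist_def power_add power_inverse)
  qed (use assms(1) in \<open>simp add: twist_def power_0_left\<close>)
qed

lemma assoc_prim_twist:
  assumes n: "n > 0" and eq: "assoc_prim (lcm f p) (twist n) = (F, \<psi>)"
  shows "dirichlet_char F \<psi>" "odd F" "in_closure (\<psi> x)"
proof -
  note g = dirichlet_char_twist[OF n]
  have F: "is_assoc_prim (lcm f p) (twist n) F \<psi>" by (rule assoc_prim_is_assoc_prim[OF g eq])
  then show \<psi>: "dirichlet_char F \<psi>" by (simp add: is_assoc_prim_def primitive_char_def)
  have "lcm f p dvd f * p" by (intro lcm_least) auto
  then have "F dvd f * p" using F dvd_trans by (metis is_assoc_prim_def)
  then show "odd F" using odd_f odd_p by (meson dvd_trans even_mult_iff)
  show "in_closure (\<psi> x)"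
  proof (cases "coprime x F")
    case True
    then obtain b where "\<psi> x = twist n b" using is_assoc_prim_lift[OF g F] by metis
    then show ?thesis using in_closure_twist by simp
  qed (use \<psi> in \<open>simp add: dirichlet_char_eq_0_iff[symmetric]\<close>)
qed

lemma eps_eq_euler_eps:
  assumes "n > 0" "(p - 1) dvd c" and "assoc_prim (lcm f p) (twist n) = (F, \<psi>)"
  shows "eps p N f \<chi> (n + j * c) = euler_eps F \<psi> (n + j * c)"
  using twist_add_mult[OF assms(1,2), of j] assms(3)
  by (simp add: eps_def euler_eps_def twist_def[abs_def])

lemma in_closure_delta_quotient_sum:
  "(\<And>x. in_closure (\<psi> x)) \<Longrightarrow> in_closure (delta_quotient_sum \<psi> F m n c k)"
  unfolding delta_quotient_sum_def by (intro in_closure_sum in_closure_mult in_closure_power) auto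

lemma in_closure_delta_euler_eps:
  assumes \<psi>: "dirichlet_char F \<psi>" "odd F" "\<And>x. in_closure (\<psi> x)" and c: "(p - 1) dvd c"
  shows "in_closure (delta_op c k (euler_eps F \<psi>) n / of_nat p ^ k)"
proof (rule in_closure_approx)
  have "padic_int (delta_op c k (euler_eps F \<psi>) n)"
    unfolding delta_op_def using padic_int_euler_eps[OF \<psi>(1,2)] by blast
  then show "algebraic (delta_op c k (euler_eps F \<psi>) n / of_nat p ^ k)"
    by (simp add: divide_inverse algebraic_mult algebraic_inverse algebraic_power padic_int_algebraic)
  fix e :: real assume "e > 0"
  obtain j where "real p ^ k / e < real p ^ j"
    using real_arch_pow[of "real p"] p_gt_1 by auto
  then have "real p ^ k / real p ^ j < e"
    using \<open>e > 0\<close> by (simp add: field_simps)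
  moreover have "N (delta_op c k (euler_eps F \<psi>) n / of_nat p ^ k
      - delta_quotient_sum \<psi> F (Suc j) n c k) \<le> real p ^ k / real p ^ j"
    by (rule N_delta_euler_eps_approx[OF \<psi>(1,2) c])
  ultimately show "\<exists>u. in_closure u \<and> N (delta_op c k (euler_eps F \<psi>) n / of_nat p ^ k - u) < e"
    using in_closure_delta_quotient_sum[OF \<psi>(3)] by (meson le_less_trans)
qed

end

theorem theorem3p1:
  fixes p f n c k :: nat and \<chi> :: "nat \<Rightarrow> complex" and N :: "complex \<Rightarrow> real"
  assumes "prime p" and "odd p"
    and "padic_abs_ext p N"
    and "primitive_char f \<chi>" and "odd f"
    and "n > 0" and "c > 0" and "k > 0" and "(p - 1) dvd c"
  shows "in_Zp_chi N \<chi> (delta_op c k (eps p N f \<chi>) n / of_nat p ^ k)"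
proof -
  interpret twisted_char p N f \<chi>
    using assms by unfold_locales auto
  obtain F \<psi> where prim: "assoc_prim (lcm f p) (twist n) = (F, \<psi>)"
    by (cases "assoc_prim (lcm f p) (twist n)")
  have "delta_op c k (eps p N f \<chi>) n = delta_op c k (euler_eps F \<psi>) n"
    using eps_eq_euler_eps[OF \<open>n > 0\<close> \<open>(p - 1) dvd c\<close> prim] by (simp add: delta_op_def)
  moreover have "in_closure (delta_op c k (euler_eps F \<psi>) n / of_nat p ^ k)"
    using assoc_prim_twist[OF \<open>n > 0\<close> prim] \<open>(p - 1) dvd c\<close> by (rule in_closure_delta_euler_eps)
  ultimately show ?thesis by (simp add: in_closure_def)
qed

end
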